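(* Let $G=(V,E)$ be a finite Eulerian graph (every vertex has even degree). For $A\subseteq E$ let $\varepsilon(A)$ denote the number of Eulerian orientations of $(V,A)$ and $h(A)$ the number of half graphs of $(V,A)$. Let $G\times K_2$ be the bipartite double cover of $G$. Then $$\varepsilon(G\times K_2)=h(G\times K_2)=\sum_{A\subseteq E}\varepsilon(A)\,h(E\setminus A).$$
   Context: An Eulerian orientation of a graph is an orientation in which every vertex has in-degree equal to out-degree. A half graph of a graph $F$ is a subset $S$ of its edges such that every vertex $v$ is incident to exactly $d_F(v)/2$ edges of $S$. The bipartite double cover $G\times K_2$ has vertex set $V\times\{0,1\}$, and for every edge $uv\in E$ it contains the two edges $(u,0)(v,1)$ and $(u,1)(v,0)$. *)

theory Defs
  imports Main
begin

definition simple_graph :: "'a set \<Rightarrow> 'a set set \<Rightarrow> bool" where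
  "simple_graph V E \<longleftrightarrow> finite V \<and> (\<forall>e\<in>E. e \<subseteq> V \<and> card e = 2)"

definition degree :: "'a set set \<Rightarrow> 'a \<Rightarrow> nat" where
  "degree E v = card {e\<in>E. v \<in> e}"

definition orientation :: "'a set set \<Rightarrow> ('a \<times> 'a) set \<Rightarrow> bool" where
  "orientation A D \<longleftrightarrow>
     (\<forall>(u,v)\<in>D. {u,v} \<in> A) \<and>
     (\<forall>u v. {u,v} \<in> A \<longrightarrow> u \<noteq> v \<longrightarrow> ((u,v) \<in> D \<longleftrightarrow> (v,u) \<notin> D))"

definition eulerian_orientation :: "'a set \<Rightarrow> 'a set set \<Rightarrow> ('a \<times> 'a) set \<Rightarrow> bool" where
  "eulerian_orientation V A D \<longleftrightarrow> orientation A D \<and>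
     (\<forall>v\<in>V. card {u. (u,v) \<in> D} = card {w. (v,w) \<in> D})"

definition num_eul_or :: "'a set \<Rightarrow> 'a set set \<Rightarrow> nat" where
  "num_eul_or V A = card {D. eulerian_orientation V A D}"

definition half_graph :: "'a set \<Rightarrow> 'a set set \<Rightarrow> 'a set set \<Rightarrow> bool" where
  "half_graph V A S \<longleftrightarrow> S \<subseteq> A \<and> (\<forall>v\<in>V. 2 * degree S v = degree A v)"

definition num_half :: "'a set \<Rightarrow> 'a set set \<Rightarrow> nat" where
  "num_half V A = card {S. half_graph V A S}"

text \<open>Bipartite double cover G \<times> K_2, with layers False (= 0) and True (= 1).\<close>
definition dc_vertices :: "'a set \<Rightarrow> ('a \<times> bool) set" where
  "dc_vertices V = V \<times> (UNIV :: bool set)"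

definition dc_edges :: "'a set set \<Rightarrow> ('a \<times> bool) set set" where
  "dc_edges E = {{(u, False), (v, True)} | u v. {u, v} \<in> E}"

end

theory Submission
  imports Defs
begin

text \<open>
  The double cover \<open>G \<times> K\<^sub>2\<close> is bipartite with sides \<open>V \<times> {False}\<close> and \<open>V \<times> {True}\<close>.
  In a bipartite graph, directing the edges of \<open>S\<close> from the \<open>False\<close> side to the \<open>True\<close>
  side and all other edges the other way is a bijection from edge sets to orientations, and
  at every vertex the orientation is balanced exactly when \<open>S\<close> contains half of the edges
  there; this gives \<open>\<epsilon>(G \<times> K\<^sub>2) = h(G \<times> K\<^sub>2)\<close>.

  Identifying the edge \<open>{(u, False), (v, True)}\<close> with the arc \<open>(u, v)\<close>, a half graph of
  \<open>G \<times> K\<^sub>2\<close> becomes a set \<open>R\<close> of arcs of \<open>G\<close> with \<open>d(v)/2\<close> outgoing and \<open>d(v)/2\<close>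
  incoming arcs at every vertex \<open>v\<close>. The edges carrying exactly one arc of \<open>R\<close> form a set
  \<open>A\<close> oriented by \<open>R\<close>, those carrying both arcs form a set \<open>B \<subseteq> E - A\<close>, and the two degree
  conditions on \<open>R\<close> at \<open>v\<close> amount to: the orientation of \<open>A\<close> is balanced at \<open>v\<close>, and \<open>B\<close>
  contains half of the edges of \<open>E - A\<close> at \<open>v\<close>.
\<close>

definition arcs :: "'a set set \<Rightarrow> ('a \<times> 'a) set" where
  "arcs E = {(u, v). {u, v} \<in> E}"

definition edges_of :: "('a \<times> 'a) set \<Rightarrow> 'a set set" where
  "edges_of R = {{u, v} | u v. (u, v) \<in> R}"

lemma arcs_iff [simp]: "(u, v) \<in> arcs E \<longleftrightarrow> {u, v} \<in> E"
  by (simp add: arcs_def)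

lemma converse_arcs [simp]: "(arcs E)\<inverse> = arcs E"
  by (auto simp: insert_commute)

lemma arcs_mono: "A \<subseteq> B \<Longrightarrow> arcs A \<subseteq> arcs B"
  by auto

lemma finite_arcs: "finite (\<Union>E) \<Longrightarrow> finite (arcs E)"
  by (rule finite_subset[of _ "\<Union>E \<times> \<Union>E"]) auto

lemma edges_of_subset_iff: "edges_of R \<subseteq> E \<longleftrightarrow> R \<subseteq> arcs E"
proof
  show "R \<subseteq> arcs E" if "edges_of R \<subseteq> E"
    using that unfolding edges_of_def by (auto dest!: subsetD[where c = "{_, _}"])
qed (auto simp: edges_of_def)

lemma edges_of_arcs:
  assumes "\<forall>e\<in>E. card e = 2"
  shows "edges_of (arcs E) = E"
  using assms by (fastforce simp: edges_of_def card_2_iff)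

lemma arcs_edges_of_sym:
  assumes "sym R"
  shows "arcs (edges_of R) = R"
  using assms by (fastforce simp: edges_of_def doubleton_eq_iff dest: symD)

lemma card_arcs_Image:
  assumes "\<forall>e\<in>E. card e = 2"
  shows "card (arcs E `` {v}) = degree E v"
proof -
  have "bij_betw (\<lambda>w. {v, w}) (arcs E `` {v}) {e\<in>E. v \<in> e}"
  proof (rule bij_betwI')
    show "{v, w} = {v, w'} \<longleftrightarrow> w = w'" if "w \<in> arcs E `` {v}" "w' \<in> arcs E `` {v}" for w w'
      using that assms by (fastforce simp: doubleton_eq_iff)
    show "\<exists>w\<in>arcs E `` {v}. e = {v, w}" if e: "e \<in> {e\<in>E. v \<in> e}" for e
    proof -
      obtain a b where "e = {a, b}" "e \<in> E" "v \<in> e"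
        using e assms by (metis (no_types, lifting) card_2_iff mem_Collect_eq)
      then show ?thesis
        by (auto simp: insert_commute)
    qed
  qed auto
  then show ?thesis
    by (simp add: degree_def bij_betw_same_card)
qed

lemma degree_Diff:
  assumes "finite F" "S \<subseteq> F"
  shows "degree F v = degree S v + degree (F - S) v"
proof -
  have "{e\<in>F. v \<in> e} = {e\<in>S. v \<in> e} \<union> {e\<in>F - S. v \<in> e}"
    using assms(2) by blast
  then show ?thesis
    using assms by (simp add: degree_def card_Un_disjoint disjoint_iff finite_subset)
qed

lemma card_Un_Image_disjoint:
  assumes "finite R" "finite S" "R \<inter> S = {}"
  shows "card ((R \<union> S) `` {v}) = card (R `` {v}) + card (S `` {v})"
proof -
  have "R `` {v} \<inter> S `` {v} = {}"
    using assms(3) by auto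
  then show ?thesis
    using assms(1,2) by (simp add: Un_Image card_Un_disjoint)
qed

lemma simple_graph_finite_edges: "simple_graph V E \<Longrightarrow> finite E"
  unfolding simple_graph_def by (meson PowI finite_Pow_iff finite_subset subsetI)

lemma simple_graph_finite_arcs: "simple_graph V E \<Longrightarrow> finite (arcs E)"
  unfolding simple_graph_def by (blast intro: finite_arcs finite_subset)

lemma orientation_arcs:
  assumes "orientation A D" "\<forall>e\<in>A. card e = 2"
  shows "arcs A = D \<union> D\<inverse>" "D \<inter> D\<inverse> = {}"
proof -
  have in_A: "{u, v} \<in> A" if "(u, v) \<in> D" for u v
    using assms(1) that unfolding orientation_def by blast
  have one_way: "(u, v) \<in> D \<longleftrightarrow> (v, u) \<notin> D" if "{u, v} \<in> A" for u v
  proof -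
    have "u \<noteq> v"
      using that assms(2) by (metis card_2_iff doubleton_eq_iff)
    then show ?thesis
      using assms(1) that unfolding orientation_def by blast
  qed
  show "arcs A = D \<union> D\<inverse>"
  proof (rule set_eqI)
    fix p :: "'a \<times> 'a"
    obtain u v where p: "p = (u, v)"
      by fastforce
    show "p \<in> arcs A \<longleftrightarrow> p \<in> D \<union> D\<inverse>"
      using one_way[of u v] in_A[of u v] in_A[of v u] unfolding p
      by (auto simp: insert_commute)
  qed
  show "D \<inter> D\<inverse> = {}"
    using in_A one_way by auto
qed

lemma edges_of_orientation:
  assumes "orientation A D" "\<forall>e\<in>A. card e = 2"
  shows "edges_of D = A"
proof -
  have "edges_of (D \<union> D\<inverse>) = A"
    using orientation_arcs(1)[OF assms] edges_of_arcs[OF assms(2)] by simp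
  then show ?thesis
    by (auto simp: edges_of_def insert_commute)
qed

lemma orientation_edges_of:
  assumes "D \<inter> D\<inverse> = {}"
  shows "orientation (edges_of D) D"
  using assms unfolding orientation_def edges_of_def
  by (auto simp: doubleton_eq_iff)

lemma eulerian_orientation_iff:
  "eulerian_orientation V A D \<longleftrightarrow>
     orientation A D \<and> (\<forall>v\<in>V. card (D\<inverse> `` {v}) = card (D `` {v}))"
  unfolding eulerian_orientation_def by (simp add: Image_singleton)

locale bipartite_edges =
  fixes side :: "'a \<Rightarrow> bool" and F :: "'a set set"
  assumes finite_edges: "finite F"
    and card_edge: "\<forall>e\<in>F. card e = 2"
    and side_differ: "{a, b} \<in> F \<Longrightarrow> side a \<noteq> side b"
begin

definition orient :: "'a set set \<Rightarrow> ('a \<times> 'a) set" where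
  "orient S = {(a, b) \<in> arcs S. \<not> side a} \<union> {(a, b) \<in> arcs (F - S). side a}"

definition forward_edges :: "('a \<times> 'a) set \<Rightarrow> 'a set set" where
  "forward_edges D = edges_of {(a, b) \<in> D. \<not> side a}"

lemma orientation_orient:
  assumes "S \<subseteq> F"
  shows "orientation F (orient S)"
  unfolding orientation_def
proof (intro conjI allI impI)
  show "\<forall>(u, v)\<in>orient S. {u, v} \<in> F"
    using assms by (auto simp: orient_def)
  show "(u, v) \<in> orient S \<longleftrightarrow> (v, u) \<notin> orient S" if "{u, v} \<in> F" for u v
    using side_differ[OF that] that by (auto simp: orient_def insert_commute)
qed

lemma forward_edges_orient:
  assumes "S \<subseteq> F"
  shows "forward_edges (orient S) = S"
proof
  show "forward_edges (orient S) \<subseteq> S"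
    by (auto simp: forward_edges_def edges_of_def orient_def)
  show "S \<subseteq> forward_edges (orient S)"
  proof
    fix e assume "e \<in> S"
    then obtain a b where e: "e = {a, b}" "\<not> side a"
      using assms card_edge side_differ
      by (metis (full_types) card_2_iff insert_commute subsetD)
    then have "(a, b) \<in> orient S"
      using \<open>e \<in> S\<close> by (simp add: orient_def)
    then show "e \<in> forward_edges (orient S)"
      using e by (auto simp: forward_edges_def edges_of_def)
  qed
qed

lemma forward_edges_subset:
  assumes "orientation F D"
  shows "forward_edges D \<subseteq> F"
  using assms by (auto simp: forward_edges_def edges_of_def orientation_def)

lemma orient_forward_edges:
  assumes "orientation F D"
  shows "orient (forward_edges D) = D"
proof -
  have arcs_F: "arcs F = D \<union> D\<inverse>" and asym: "D \<inter> D\<inverse> = {}"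
    using orientation_arcs[OF assms card_edge] by auto
  have forward_iff: "{a, b} \<in> forward_edges D \<longleftrightarrow> (a, b) \<in> D \<and> \<not> side a \<or> (b, a) \<in> D \<and> \<not> side b"
    for a b
    by (auto simp: forward_edges_def edges_of_def doubleton_eq_iff)
  have "(a, b) \<in> orient (forward_edges D) \<longleftrightarrow> (a, b) \<in> D" for a b
  proof (cases "{a, b} \<in> F")
    case True
    then have "side a \<noteq> side b" "(a, b) \<in> D \<longleftrightarrow> (b, a) \<notin> D"
      using side_differ arcs_F asym by auto
    then show ?thesis
      using True forward_iff[of a b] by (auto simp: orient_def)
  next
    case False
    then have "(a, b) \<notin> arcs F" "{a, b} \<notin> forward_edges D"
      using forward_edges_subset[OF assms] by auto
    then have "(a, b) \<notin> D" "{a, b} \<notin> forward_edges D"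
      using arcs_F by auto
    then show ?thesis
      using False by (auto simp: orient_def)
  qed
  then show ?thesis
    by auto
qed

lemma balanced_orient_iff:
  assumes "S \<subseteq> F"
  shows "card ((orient S)\<inverse> `` {x}) = card (orient S `` {x}) \<longleftrightarrow> 2 * degree S x = degree F x"
proof -
  have out: "orient S `` {x} = (if side x then arcs (F - S) else arcs S) `` {x}"
    by (auto simp: orient_def)
  have "(orient S)\<inverse> `` {x} = (if side x then arcs S else arcs (F - S)) `` {x}"
    using assms side_differ by (auto simp: orient_def insert_commute)
  moreover have "card (arcs S `` {x}) = degree S x" "card (arcs (F - S) `` {x}) = degree (F - S) x"
    using assms card_edge by (auto intro!: card_arcs_Image)
  moreover have "degree F x = degree S x + degree (F - S) x"
    using degree_Diff[OF finite_edges assms] .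
  ultimately show ?thesis
    unfolding out by auto
qed

theorem num_eul_or_eq_num_half: "num_eul_or W F = num_half W F"
proof -
  have "bij_betw orient {S. half_graph W F S} {D. eulerian_orientation W F D}"
  proof (rule bij_betw_byWitness[where f' = forward_edges])
    show "\<forall>S\<in>{S. half_graph W F S}. forward_edges (orient S) = S"
      by (simp add: half_graph_def forward_edges_orient)
    show "\<forall>D\<in>{D. eulerian_orientation W F D}. orient (forward_edges D) = D"
      by (simp add: eulerian_orientation_def orient_forward_edges)
    show "orient ` {S. half_graph W F S} \<subseteq> {D. eulerian_orientation W F D}"
      by (auto simp: half_graph_def eulerian_orientation_iff orientation_orient balanced_orient_iff)
    show "forward_edges ` {D. eulerian_orientation W F D} \<subseteq> {S. half_graph W F S}"
    proof clarify
      fix D assume "eulerian_orientation W F D"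
      then have D: "orientation F D" "\<forall>v\<in>W. card (D\<inverse> `` {v}) = card (D `` {v})"
        by (simp_all add: eulerian_orientation_iff)
      have sub: "forward_edges D \<subseteq> F"
        using forward_edges_subset[OF D(1)] .
      then show "half_graph W F (forward_edges D)"
        using D(2) balanced_orient_iff[OF sub] orient_forward_edges[OF D(1)]
        by (simp add: half_graph_def)
    qed
  qed
  then show ?thesis
    unfolding num_eul_or_def num_half_def by (simp add: bij_betw_same_card)
qed

end

definition cover_edge :: "'a \<times> 'a \<Rightarrow> ('a \<times> bool) set" where
  "cover_edge = (\<lambda>(u, v). {(u, False), (v, True)})"

lemma inj_cover_edge: "inj cover_edge"
  by (rule injI) (auto simp: cover_edge_def doubleton_eq_iff)

lemma dc_edges_eq: "dc_edges E = cover_edge ` arcs E"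
  unfolding dc_edges_def cover_edge_def by auto blast

lemma degree_cover_edge_False: "degree (cover_edge ` R) (v, False) = card (R `` {v})"
proof -
  have "{e \<in> cover_edge ` R. (v, False) \<in> e} = (\<lambda>w. cover_edge (v, w)) ` (R `` {v})"
    by (auto simp: cover_edge_def)
  moreover have "inj (\<lambda>w. cover_edge (v, w))"
    by (rule injI) (auto simp: cover_edge_def doubleton_eq_iff)
  ultimately show ?thesis
    unfolding degree_def by (simp add: card_image inj_on_subset)
qed

lemma degree_cover_edge_True: "degree (cover_edge ` R) (v, True) = card (R\<inverse> `` {v})"
proof -
  have "{e \<in> cover_edge ` R. (v, True) \<in> e} = (\<lambda>u. cover_edge (u, v)) ` (R\<inverse> `` {v})"
    by (auto simp: cover_edge_def)
  moreover have "inj (\<lambda>u. cover_edge (u, v))"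
    by (rule injI) (auto simp: cover_edge_def doubleton_eq_iff)
  ultimately show ?thesis
    unfolding degree_def by (simp add: card_image inj_on_subset)
qed

lemma bipartite_edges_dc_edges:
  assumes "finite (\<Union>E)"
  shows "bipartite_edges snd (dc_edges E)"
proof
  show "finite (dc_edges E)"
    unfolding dc_edges_eq using finite_arcs[OF assms] by simp
  show "\<forall>e\<in>dc_edges E. card e = 2"
    by (auto simp: dc_edges_def)
  show "snd a \<noteq> snd b" if "{a, b} \<in> dc_edges E" for a b
    using that by (auto simp: dc_edges_def doubleton_eq_iff)
qed

definition half_arc_set :: "'a set \<Rightarrow> 'a set set \<Rightarrow> ('a \<times> 'a) set \<Rightarrow> bool" where
  "half_arc_set V E R \<longleftrightarrow> R \<subseteq> arcs E \<and>
     (\<forall>v\<in>V. 2 * card (R `` {v}) = degree E v \<and> 2 * card (R\<inverse> `` {v}) = degree E v)"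

lemma half_graph_cover_iff:
  assumes "\<forall>e\<in>E. card e = 2"
  shows "half_graph (dc_vertices V) (dc_edges E) (cover_edge ` R) \<longleftrightarrow> half_arc_set V E R"
proof -
  have "degree (dc_edges E) (v, b) = degree E v" for v b
    using card_arcs_Image[OF assms]
    by (cases b) (simp_all add: dc_edges_eq degree_cover_edge_False degree_cover_edge_True)
  then show ?thesis
    unfolding half_graph_def half_arc_set_def dc_vertices_def
    by (simp add: dc_edges_eq inj_image_subset_iff[OF inj_cover_edge] all_bool_eq
        degree_cover_edge_False degree_cover_edge_True conj_commute)
qed

lemma num_half_dc_eq:
  assumes "\<forall>e\<in>E. card e = 2"
  shows "num_half (dc_vertices V) (dc_edges E) = card {R. half_arc_set V E R}"
proof -
  have "{S. half_graph (dc_vertices V) (dc_edges E) S} = image cover_edge ` {R. half_arc_set V E R}"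
  proof (intro set_eqI iffI)
    fix S assume "S \<in> {S. half_graph (dc_vertices V) (dc_edges E) S}"
    moreover then obtain R where "S = cover_edge ` R"
      by (auto simp: half_graph_def dc_edges_eq subset_image_iff)
    ultimately show "S \<in> image cover_edge ` {R. half_arc_set V E R}"
      using half_graph_cover_iff[OF assms] by auto
  qed (use half_graph_cover_iff[OF assms] in auto)
  moreover have "inj (image cover_edge)"
    by (rule injI) (simp add: inj_image_eq_iff[OF inj_cover_edge])
  ultimately show ?thesis
    unfolding num_half_def by (metis card_image inj_on_subset subset_UNIV)
qed

lemma arc_set_decompose:
  assumes "R \<subseteq> arcs E"
  shows "edges_of (R - R\<inverse>) \<subseteq> E"
    and "orientation (edges_of (R - R\<inverse>)) (R - R\<inverse>)"
    and "edges_of (R \<inter> R\<inverse>) \<subseteq> E - edges_of (R - R\<inverse>)"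
    and "(R - R\<inverse>) \<union> arcs (edges_of (R \<inter> R\<inverse>)) = R"
proof -
  show "edges_of (R - R\<inverse>) \<subseteq> E"
    using assms by (auto simp: edges_of_subset_iff)
  show "orientation (edges_of (R - R\<inverse>)) (R - R\<inverse>)"
    by (rule orientation_edges_of) auto
  have "edges_of (R \<inter> R\<inverse>) \<inter> edges_of (R - R\<inverse>) = {}"
    by (auto simp: edges_of_def doubleton_eq_iff)
  moreover have "edges_of (R \<inter> R\<inverse>) \<subseteq> E"
    using assms by (auto simp: edges_of_subset_iff)
  ultimately show "edges_of (R \<inter> R\<inverse>) \<subseteq> E - edges_of (R - R\<inverse>)"
    by blast
  show "(R - R\<inverse>) \<union> arcs (edges_of (R \<inter> R\<inverse>)) = R"
    using arcs_edges_of_sym[OF sym_Int_converse] by blast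
qed

lemma arc_set_compose:
  assumes "\<forall>e\<in>E. card e = 2" "A \<subseteq> E" "orientation A D" "B \<subseteq> E - A"
  shows "(D \<union> arcs B) - (D \<union> arcs B)\<inverse> = D"
    and "(D \<union> arcs B) \<inter> (D \<union> arcs B)\<inverse> = arcs B"
    and "D \<union> arcs B \<subseteq> arcs E"
proof -
  have A: "\<forall>e\<in>A. card e = 2"
    using assms(1,2) by blast
  have arcs_A: "arcs A = D \<union> D\<inverse>" and asym: "D \<inter> D\<inverse> = {}"
    using orientation_arcs[OF assms(3) A] by auto
  have disj: "arcs A \<inter> arcs B = {}"
    using assms(4) by auto
  have conv: "(D \<union> arcs B)\<inverse> = D\<inverse> \<union> arcs B"
    by (simp add: converse_Un)
  show "(D \<union> arcs B) - (D \<union> arcs B)\<inverse> = D"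
    unfolding conv using arcs_A asym disj by blast
  show "(D \<union> arcs B) \<inter> (D \<union> arcs B)\<inverse> = arcs B"
    unfolding conv using arcs_A asym disj by blast
  show "D \<union> arcs B \<subseteq> arcs E"
    using arcs_A arcs_mono[OF assms(2)] arcs_mono[of B E] assms(4) by blast
qed

lemma half_arc_set_Un_iff:
  assumes G: "simple_graph V E" and "A \<subseteq> E" "orientation A D" "B \<subseteq> E - A"
  shows "half_arc_set V E (D \<union> arcs B) \<longleftrightarrow> eulerian_orientation V A D \<and> half_graph V (E - A) B"
proof -
  have card_E: "\<forall>e\<in>E. card e = 2" and "finite E"
    using G simple_graph_finite_edges by (auto simp: simple_graph_def)
  have arcs_A: "arcs A = D \<union> D\<inverse>" "D \<inter> D\<inverse> = {}"
    using orientation_arcs[OF assms(3)] card_E assms(2) by auto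
  have "arcs A \<subseteq> arcs E" "arcs B \<subseteq> arcs E" "arcs A \<inter> arcs B = {}"
    using assms(2,4) by auto
  then have fin: "finite D" "finite (arcs B)" and disj: "D \<inter> arcs B = {}" "D\<inverse> \<inter> arcs B = {}"
    using simple_graph_finite_arcs[OF G] arcs_A by (auto intro: finite_subset)
  have "\<forall>e\<in>B. card e = 2"
    using card_E assms(4) by blast
  note degree_B = card_arcs_Image[OF this]
  have out: "card ((D \<union> arcs B) `` {v}) = card (D `` {v}) + degree B v"
    and into: "card ((D \<union> arcs B)\<inverse> `` {v}) = card (D\<inverse> `` {v}) + degree B v"
    and deg: "degree E v = card (D `` {v}) + card (D\<inverse> `` {v}) + degree (E - A) v" for v
  proof -
    show "card ((D \<union> arcs B) `` {v}) = card (D `` {v}) + degree B v"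
      using card_Un_Image_disjoint[OF fin disj(1)] degree_B by simp
    show "card ((D \<union> arcs B)\<inverse> `` {v}) = card (D\<inverse> `` {v}) + degree B v"
      using card_Un_Image_disjoint[of "D\<inverse>" "arcs B"] fin disj(2) degree_B
      by (simp add: converse_Un)
    have "degree A v = card (D `` {v}) + card (D\<inverse> `` {v})"
      using card_arcs_Image[of A v] card_E assms(2) arcs_A fin card_Un_Image_disjoint[of D "D\<inverse>"]
      by (metis finite_converse subsetD)
    then show "degree E v = card (D `` {v}) + card (D\<inverse> `` {v}) + degree (E - A) v"
      using degree_Diff[OF \<open>finite E\<close> assms(2)] by simp
  qed
  have "(2 * card ((D \<union> arcs B) `` {v}) = degree E v \<and> 2 * card ((D \<union> arcs B)\<inverse> `` {v}) = degree E v)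
      \<longleftrightarrow> card (D\<inverse> `` {v}) = card (D `` {v}) \<and> 2 * degree B v = degree (E - A) v" for v
    unfolding out into deg by arith
  moreover have "D \<union> arcs B \<subseteq> arcs E"
    using arc_set_compose[OF card_E assms(2-4)] by simp
  ultimately show ?thesis
    using assms(3,4)
    unfolding half_arc_set_def eulerian_orientation_iff half_graph_def by auto
qed

definition arc_set_parts :: "('a \<times> 'a) set \<Rightarrow> 'a set set \<times> ('a \<times> 'a) set \<times> 'a set set" where
  "arc_set_parts R = (edges_of (R - R\<inverse>), R - R\<inverse>, edges_of (R \<inter> R\<inverse>))"

lemma bij_betw_arc_set_parts:
  assumes G: "simple_graph V E"
  shows "bij_betw arc_set_parts {R. half_arc_set V E R}
           (SIGMA A:Pow E. {D. eulerian_orientation V A D} \<times> {B. half_graph V (E - A) B})"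
    (is "bij_betw _ _ ?P")
proof (rule bij_betw_byWitness[where f' = "\<lambda>(A, D, B). D \<union> arcs B"])
  have card_E: "\<forall>e\<in>E. card e = 2"
    using G by (simp add: simple_graph_def)
  show "\<forall>R\<in>{R. half_arc_set V E R}. (\<lambda>(A, D, B). D \<union> arcs B) (arc_set_parts R) = R"
    using arc_set_decompose(4) by (auto simp: arc_set_parts_def half_arc_set_def)
  show "\<forall>p\<in>?P. arc_set_parts ((\<lambda>(A, D, B). D \<union> arcs B) p) = p"
  proof
    fix p assume "p \<in> ?P"
    then obtain A D B where p: "p = (A, D, B)" and A: "A \<subseteq> E" "orientation A D" "B \<subseteq> E - A"
      by (auto simp: eulerian_orientation_def half_graph_def)
    have "\<forall>e\<in>A. card e = 2" "\<forall>e\<in>B. card e = 2"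
      using card_E A by auto
    then show "arc_set_parts ((\<lambda>(A, D, B). D \<union> arcs B) p) = p"
      using arc_set_compose(1,2)[OF card_E A] A(2)
      by (simp add: p arc_set_parts_def edges_of_orientation edges_of_arcs)
  qed
  show "arc_set_parts ` {R. half_arc_set V E R} \<subseteq> ?P"
  proof (rule image_subsetI)
    fix R assume R: "R \<in> {R. half_arc_set V E R}"
    then have "R \<subseteq> arcs E"
      by (simp add: half_arc_set_def)
    note decomposed = arc_set_decompose[OF this]
    show "arc_set_parts R \<in> ?P"
      using R half_arc_set_Un_iff[OF G decomposed(1-3)] decomposed(1,4)
      by (simp add: arc_set_parts_def)
  qed
  show "(\<lambda>(A, D, B). D \<union> arcs B) ` ?P \<subseteq> {R. half_arc_set V E R}"
    using half_arc_set_Un_iff[OF G] by (auto simp: eulerian_orientation_def half_graph_def)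
qed

lemma card_half_arc_sets:
  assumes G: "simple_graph V E"
  shows "card {R. half_arc_set V E R} = (\<Sum>A\<in>Pow E. num_eul_or V A * num_half V (E - A))"
proof -
  have "finite {D. eulerian_orientation V A D}" if "A \<subseteq> E" for A
  proof (rule finite_subset)
    show "{D. eulerian_orientation V A D} \<subseteq> Pow (arcs E)"
      using that by (auto simp: eulerian_orientation_def orientation_def)
  qed (simp add: simple_graph_finite_arcs[OF G])
  moreover have "finite {B. half_graph V (E - A) B}" for A
  proof (rule finite_subset)
    show "{B. half_graph V (E - A) B} \<subseteq> Pow E"
      by (auto simp: half_graph_def)
  qed (simp add: simple_graph_finite_edges[OF G])
  ultimately show ?thesis
    using bij_betw_same_card[OF bij_betw_arc_set_parts[OF G]] simple_graph_finite_edges[OF G]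
    by (simp add: num_eul_or_def num_half_def card_cartesian_product)
qed

theorem theorem1p4:
  fixes V :: "'a set" and E :: "'a set set"
  assumes "simple_graph V E"
    and "\<forall>v\<in>V. even (degree E v)"
  shows "num_eul_or (dc_vertices V) (dc_edges E) = num_half (dc_vertices V) (dc_edges E)
       \<and> num_half (dc_vertices V) (dc_edges E) =
           (\<Sum>A\<in>Pow E. num_eul_or V A * num_half V (E - A))"
proof -
  have "finite (\<Union>E)" and card_E: "\<forall>e\<in>E. card e = 2"
    using assms(1) unfolding simple_graph_def by (auto intro: finite_subset)
  then have "num_eul_or (dc_vertices V) (dc_edges E) = num_half (dc_vertices V) (dc_edges E)"
    by (intro bipartite_edges.num_eul_or_eq_num_half[of snd] bipartite_edges_dc_edges)
  moreover have "num_half (dc_vertices V) (dc_edges E) = card {R. half_arc_set V E R}"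
    using num_half_dc_eq[OF card_E] .
  ultimately show ?thesis
    using card_half_arc_sets[OF assms(1)] by simp
qed

end
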